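(* Let $n,m\ge1$, let $V'$ and $W'$ be complex Hilbert spaces with $\dim V'=n$ and $\dim W'=m$, let $\varepsilon\in\{0,1\}$, and let $R\in End\big((V'\otimes W')^{\otimes 2}\big)$ be defined by $$R(v\otimes w\otimes v'\otimes w')=(-1)^\varepsilon\, v'\otimes w\otimes v\otimes w'\qquad(v,v'\in V',\ w,w'\in W').$$ Then $R$ is an $R$-matrix, and its Thoma parameters are $\alpha_1=\dots=\alpha_n=\frac1n$ (all other $\alpha_i=0$), $\beta=0$ if $\varepsilon=0$; and $\alpha=0$, $\beta_1=\dots=\beta_n=\frac1n$ (all other $\beta_i=0$) if $\varepsilon=1$.
   Context: For a finite-dimensional Hilbert space $E$ of dimension $D$, an $R$-matrix is $R\in End(E\otimes E)$ with $R^2=1$ and $(R\otimes1)(1\otimes R)(R\otimes1)=(1\otimes R)(R\otimes1)(1\otimes R)$. Its Yang-Baxter representation $\rho_R$ of $\mathfrak{S}_\infty$ sends $\sigma_i=(i\ i{+}1)$ to $1^{\otimes i-1}\otimes R\otimes1\otimes\cdots\in\bigotimes_{k\ge1}End(E)$, and its Yang-Baxter character is $\chi_R=\tau\circ\rho_R$ with $\tau=\bigotimes_{k\ge1}\frac{\mathrm{Tr}}{D}$. Extremal characters of $\mathfrak{S}_\infty$ are in bijection (Thoma) with pairs of nonincreasing nonnegative sequences $(\alpha,\beta)$ with $\sum_i\alpha_i+\beta_i\le1$, via $\chi(c_k)=\sum_i\alpha_i^k+(-1)^{k-1}\beta_i^k$ for $k\ge2$, where $c_k=(1\,2\,\cdots\,k)$;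 the Thoma parameters of $R$ are the pair $(\alpha,\beta)$ corresponding to $\chi_R$. *)

theory Defs
  imports Complex_Main
begin

text \<open>A finite-dimensional Hilbert space E is represented by an orthonormal basis,
  indexed by a finite set S.  A vector of E^(tensor N) is indexed by basis words:
  lists of length N with entries in S.  Operators on E^(tensor N) are matrices
  (output word, input word) to complex.\<close>

definition words :: "'b set \<Rightarrow> nat \<Rightarrow> 'b list set" where
  "words S N = {xs. length xs = N \<and> set xs \<subseteq> S}"

definition mmul :: "'b set \<Rightarrow> nat \<Rightarrow> ('b list \<Rightarrow> 'b list \<Rightarrow> complex)
    \<Rightarrow> ('b list \<Rightarrow> 'b list \<Rightarrow> complex) \<Rightarrow> ('b list \<Rightarrow> 'b list \<Rightarrow> complex)" where
  "mmul S N A B = (\<lambda>x z. \<Sum>y\<in>words S N. A x y * B y z)"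

definition ident :: "'b list \<Rightarrow> 'b list \<Rightarrow> complex" where
  "ident x y = (if x = y then 1 else 0)"

definition op_eq :: "'b set \<Rightarrow> nat \<Rightarrow> ('b list \<Rightarrow> 'b list \<Rightarrow> complex)
    \<Rightarrow> ('b list \<Rightarrow> 'b list \<Rightarrow> complex) \<Rightarrow> bool" where
  "op_eq S N A B = (\<forall>x\<in>words S N. \<forall>y\<in>words S N. A x y = B x y)"

text \<open>The operator 1^(i) \<otimes> R \<otimes> 1^(N-i-2) on E^(tensor N), R acting on tensor
  factors i, i+1 (0-based).\<close>
definition loc :: "nat \<Rightarrow> nat \<Rightarrow> ('b list \<Rightarrow> 'b list \<Rightarrow> complex)
    \<Rightarrow> ('b list \<Rightarrow> 'b list \<Rightarrow> complex)" where
  "loc N i R = (\<lambda>x y. R [x ! i, x ! (i+1)] [y ! i, y ! (i+1)] *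
      (if \<forall>k<N. k \<noteq> i \<and> k \<noteq> i + 1 \<longrightarrow> x ! k = y ! k then 1 else 0))"

definition is_R_matrix :: "'b set \<Rightarrow> ('b list \<Rightarrow> 'b list \<Rightarrow> complex) \<Rightarrow> bool" where
  "is_R_matrix S R \<longleftrightarrow>
     op_eq S 2 (mmul S 2 R R) ident \<and>
     op_eq S 3 (mmul S 3 (loc 3 0 R) (mmul S 3 (loc 3 1 R) (loc 3 0 R)))
               (mmul S 3 (loc 3 1 R) (mmul S 3 (loc 3 0 R) (loc 3 1 R)))"

text \<open>Yang-Baxter representation evaluated on the permutation
  sigma_(w!0) sigma_(w!1) ... (a word in the Coxeter generators; sigma_i swaps i and i+1),
  realised on E^(tensor N).\<close>
definition rho_word :: "'b set \<Rightarrow> nat \<Rightarrow> ('b list \<Rightarrow> 'b list \<Rightarrow> complex) \<Rightarrow> nat list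
    \<Rightarrow> ('b list \<Rightarrow> 'b list \<Rightarrow> complex)" where
  "rho_word S N R w = foldr (\<lambda>i A. mmul S N (loc N i R) A) w ident"

definition chi_word :: "'b set \<Rightarrow> nat \<Rightarrow> ('b list \<Rightarrow> 'b list \<Rightarrow> complex) \<Rightarrow> nat list \<Rightarrow> complex" where
  "chi_word S N R w = (\<Sum>x\<in>words S N. rho_word S N R w x x) / of_nat (card S ^ N)"

definition adjswap :: "nat \<Rightarrow> nat \<Rightarrow> nat" where
  "adjswap i = (\<lambda>k. if k = i then i + 1 else if k = i + 1 then i else k)"

definition perm_of_word :: "nat list \<Rightarrow> nat \<Rightarrow> nat" where
  "perm_of_word w = foldr (\<lambda>i f. adjswap i \<circ> f) w id"

definition thoma_params :: "(nat \<Rightarrow> real) \<Rightarrow> (nat \<Rightarrow> real) \<Rightarrow> bool" where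
  "thoma_params \<alpha> \<beta> \<longleftrightarrow> (\<forall>i. \<alpha> i \<ge> 0 \<and> \<beta> i \<ge> 0) \<and> antimono \<alpha> \<and> antimono \<beta> \<and>
     summable \<alpha> \<and> summable \<beta> \<and> (\<Sum>i. \<alpha> i) + (\<Sum>i. \<beta> i) \<le> 1"

definition thoma_p :: "(nat \<Rightarrow> real) \<Rightarrow> (nat \<Rightarrow> real) \<Rightarrow> nat \<Rightarrow> real" where
  "thoma_p \<alpha> \<beta> k = (\<Sum>i. \<alpha> i ^ k) + (-1) ^ (k - 1) * (\<Sum>i. \<beta> i ^ k)"

definition perm_orbit :: "(nat \<Rightarrow> nat) \<Rightarrow> nat \<Rightarrow> nat set" where
  "perm_orbit p x = {(p ^^ k) x | k. True}"

definition thoma_char :: "(nat \<Rightarrow> real) \<Rightarrow> (nat \<Rightarrow> real) \<Rightarrow> (nat \<Rightarrow> nat) \<Rightarrow> real" where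
  "thoma_char \<alpha> \<beta> p = (\<Prod>C\<in>perm_orbit p ` {x. p x \<noteq> x}. thoma_p \<alpha> \<beta> (card C))"

text \<open>The operator of the theorem on E\<otimes>E, E = V'\<otimes>W' with basis e_i\<otimes>f_j (i<n, j<m):
  R(e_a f_b \<otimes> e_c f_d) = (-1)^eps e_c f_b \<otimes> e_a f_d.\<close>
definition swapV_R :: "nat \<Rightarrow> (nat \<times> nat) list \<Rightarrow> (nat \<times> nat) list \<Rightarrow> complex" where
  "swapV_R \<epsilon> x y = (if length y = 2 \<and> x = [(fst (y!1), snd (y!0)), (fst (y!0), snd (y!1))]
                     then (-1) ^ \<epsilon> else 0)"

definition basisVW :: "nat \<Rightarrow> nat \<Rightarrow> (nat \<times> nat) set" where
  "basisVW n m = {..<n} \<times> {..<m}"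

end

theory Submission
  imports Defs "HOL-Combinatorics.Orbits"
begin

(* In the basis e_a f_b of V' (x) W', the operator R exchanges the V'-labels of two adjacent
   tensor factors and multiplies by (-1)^eps.  Hence rho_R of a word w in the Coxeter generators
   is (-1)^(eps |w|) times the permutation of V'-labels by the permutation P of w, and its trace
   counts the basis words whose V'-labels are constant on the cycles of P: there are
   n^c(P) m^N of them, c(P) being the number of cycles (fixed points included).  Since
   (-1)^|w| = sgn P = (-1)^(N - c(P)), the normalised trace is ((-1)^eps / n)^(N - c(P)), which is
   the product over the cycles C of ((-1)^eps / n)^(|C| - 1) = p_|C|(alpha, beta). *)

lemma permutation_orbit_eq:
  assumes "permutation p" "y \<in> orbit p x"
  shows "orbit p y = orbit p x"
  using assms by (metis cyclic_on_orbit' orbit_cyclic_eq3)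

lemma permutation_orbits_disjnt:
  assumes "permutation p" "orbit p a \<noteq> orbit p b"
  shows "disjnt (orbit p a) (orbit p b)"
  using assms by (metis disjoint_iff disjnt_def permutation_orbit_eq)

lemma sum_card_orbits:
  assumes "p permutes S" "finite S"
  shows "(\<Sum>D\<in>orbit p ` S. card D) = card S"
proof -
  have perm: "permutation p"
    using assms permutation_permutes by blast
  have "pairwise disjnt (orbit p ` S)"
    unfolding pairwise_image using permutation_orbits_disjnt[OF perm] by (simp add: pairwise_def)
  moreover have "finite D" if "D \<in> orbit p ` S" for D
    using that by (auto intro!: finite_orbit permutation_self_in_orbit[OF perm])
  ultimately have "card (\<Union>(orbit p ` S)) = (\<Sum>D\<in>orbit p ` S. card D)"
    by (rule card_Union_disjoint)
  moreover have "\<Union>(orbit p ` S) = S"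
  proof
    show "\<Union>(orbit p ` S) \<subseteq> S"
      using permutes_orbit_subset[OF assms(1)] by (rule UN_least)
    show "S \<subseteq> \<Union>(orbit p ` S)"
      using permutation_self_in_orbit[OF perm] by blast
  qed
  ultimately show ?thesis
    by simp
qed

lemma orbit_transpose_comp_outside:
  assumes perm: "permutation p" and z: "z \<notin> orbit p x"
  shows "orbit (transpose x (p x) \<circ> p) z = orbit p z"
proof (rule orbit_cong)
  show "z \<in> orbit p z"
    using perm by (rule permutation_self_in_orbit)
  fix s assume "s \<in> orbit p z"
  then have "orbit p (p s) = orbit p z"
    by (intro permutation_orbit_eq[OF perm] orbit.step)
  then have "p s \<noteq> x" "p s \<noteq> p x"
    using z permutation_self_in_orbit[OF perm, of z] permutation_orbit_step[OF perm, of x] by auto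
  then show "(transpose x (p x) \<circ> p) s = p s"
    by simp
qed

lemma transpose_comp_apply:
  assumes "inj p" "p u = x"
  shows "(transpose x (p x) \<circ> p) s = (if s = x then x else if s = u then p x else p s)"
  using assms by (auto simp: transpose_def dest: injD)

lemma orbit_transpose_comp_subset:
  assumes perm: "permutation p" and z: "z \<in> orbit p x" "z \<noteq> x"
  shows "orbit (transpose x (p x) \<circ> p) z \<subseteq> orbit p x - {x}"
proof -
  let ?q = "transpose x (p x) \<circ> p" and ?C = "orbit p x"
  obtain u where u: "p u = x"
    using perm by (metis bij_pointE permutation_bijective)
  have inj: "inj p"
    using perm by (simp add: permutation_bijective bij_is_inj)
  have "p x \<noteq> x"
    using z orbit_eq_singleton_iff[of p x] by blast
  then have closed: "?q s \<in> ?C - {x}" if "s \<in> ?C - {x}" for s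
    using that transpose_comp_apply[OF inj u, of s] u inj by (auto intro: orbit.intros dest: injD)
  show ?thesis
  proof
    fix w assume "w \<in> orbit ?q z"
    then show "w \<in> ?C - {x}"
      by induction (use z closed in auto)
  qed
qed

lemma orbit_transpose_comp_inside:
  assumes perm: "permutation p" and z: "z \<in> orbit p x" "z \<noteq> x"
  shows "orbit (transpose x (p x) \<circ> p) z = orbit p x - {x}"
proof -
  define q where "q = transpose x (p x) \<circ> p"
  obtain u where u: "p u = x"
    using perm by (metis bij_pointE permutation_bijective)
  have q: "q s = (if s = x then x else if s = u then p x else p s)" for s
    unfolding q_def using perm u
    by (intro transpose_comp_apply) (simp_all add: permutation_bijective bij_is_inj)
  have sub: "orbit q z \<subseteq> orbit p x - {x}"
    unfolding q_def using perm z by (rule orbit_transpose_comp_subset)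
  have "p x \<noteq> x"
    using z orbit_eq_singleton_iff[of p x] by blast
  \<comment> \<open>Along the \<open>p\<close>-cycle, \<open>q\<close> only replaces the two steps \<open>u \<mapsto> x \<mapsto> p x\<close> by \<open>u \<mapsto> p x\<close>.\<close>
  have "w \<in> orbit q z \<or> (w = x \<and> u \<in> orbit q z)" if "w \<in> orbit p z" for w
    using that
  proof induction
    case base
    have "z \<in> orbit q z"
      unfolding q_def
      by (intro permutation_self_in_orbit permutation_compose permutation_swap_id perm)
    then show ?case
      using q[of z] u z(2) orbit.base[of q z] by (cases "z = u") auto
  next
    case (step w)
    then consider "w = x" "u \<in> orbit q z" | "w = u" "u \<in> orbit q z"
      | "w \<in> orbit q z" "w \<noteq> x" "w \<noteq> u"
      using sub by blast
    then show ?case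
    proof cases
      case 1
      then show ?thesis
        using orbit.step[of u q z] q[of u] u \<open>p x \<noteq> x\<close> by (cases "u = x") auto
    next
      case 2
      then show ?thesis
        using u by simp
    next
      case 3
      then show ?thesis
        using orbit.step[of w q z] q[of w] by simp
    qed
  qed
  moreover have "orbit p z = orbit p x"
    using permutation_orbit_eq[OF perm z(1)] .
  ultimately show ?thesis
    using sub unfolding q_def by blast
qed

lemma orbits_transpose_comp:
  assumes p: "p permutes S" "finite S" and x: "x \<in> S" "p x \<noteq> x"
  shows "orbit (transpose x (p x) \<circ> p) ` S =
    insert {x} (insert (orbit p x - {x}) (orbit p ` S - {orbit p x}))"
proof -
  let ?q = "transpose x (p x) \<circ> p" and ?C = "orbit p x"
  have perm: "permutation p"
    using p permutation_permutes by blast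
  have C: "?C \<subseteq> S" "x \<in> ?C" "p x \<in> ?C - {x}"
    using permutes_orbit_subset[OF p(1) x(1)] permutation_self_in_orbit[OF perm] x(2)
    by (auto intro: orbit.base)
  have "S = {x} \<union> (?C - {x}) \<union> (S - ?C)"
    using C by blast
  then have split: "orbit ?q ` S = orbit ?q ` {x} \<union> orbit ?q ` (?C - {x}) \<union> orbit ?q ` (S - ?C)"
    by (metis image_Un)
  have "orbit ?q ` {x} = {{x}}"
    by (simp add: orbit_eq_singleton_iff)
  moreover have "orbit ?q ` (?C - {x}) = {?C - {x}}"
  proof -
    have "orbit ?q ` (?C - {x}) = (\<lambda>_. ?C - {x}) ` (?C - {x})"
      using orbit_transpose_comp_inside[OF perm] by (intro image_cong) auto
    also have "\<dots> = {?C - {x}}"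
      using C(3) by (rule image_constant)
    finally show ?thesis .
  qed
  moreover have "orbit ?q ` (S - ?C) = orbit p ` S - {?C}"
  proof -
    have "orbit ?q ` (S - ?C) = orbit p ` (S - ?C)"
      using orbit_transpose_comp_outside[OF perm] by (intro image_cong) auto
    also have "\<dots> = orbit p ` S - {?C}"
      using permutation_orbit_eq[OF perm] permutation_self_in_orbit[OF perm] by blast
    finally show ?thesis .
  qed
  ultimately show ?thesis
    unfolding split by (simp add: insert_commute)
qed

lemma card_orbits_transpose_comp:
  assumes p: "p permutes S" "finite S" and x: "x \<in> S" "p x \<noteq> x"
  shows "card (orbit (transpose x (p x) \<circ> p) ` S) = Suc (card (orbit p ` S))"
proof -
  let ?C = "orbit p x" and ?O = "orbit p ` S"
  have perm: "permutation p"
    using p permutation_permutes by blast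
  have self: "z \<in> orbit p z" for z
    using perm by (rule permutation_self_in_orbit)
  have "{x} \<notin> ?O"
  proof
    assume "{x} \<in> ?O"
    then obtain z where "orbit p z = {x}"
      by auto
    then have "?C = {x}"
      using permutation_orbit_eq[OF perm, of x z] by simp
    then show False
      using x(2) orbit_eq_singleton_iff by metis
  qed
  moreover have "?C - {x} \<notin> ?O"
  proof
    assume "?C - {x} \<in> ?O"
    then obtain z where z: "orbit p z = ?C - {x}"
      by auto
    then have "z \<in> ?C"
      using self[of z] by simp
    then have "orbit p z = ?C"
      using permutation_orbit_eq[OF perm] by simp
    then show False
      using z self[of x] by auto
  qed
  moreover have "{x} \<noteq> ?C - {x}"
    by blast
  moreover have "?C \<in> ?O"
    using x(1) by (rule imageI)
  moreover from this have "card ?O > 0"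
    using p(2) by (auto simp: card_gt_0_iff)
  ultimately show ?thesis
    unfolding orbits_transpose_comp[OF p x] using p(2) by simp
qed

lemma card_support_transpose_comp_less:
  assumes p: "p permutes S" "finite S" and x: "p x \<noteq> x"
  shows "card {y. (transpose x (p x) \<circ> p) y \<noteq> y} < card {y. p y \<noteq> y}"
proof -
  let ?q = "transpose x (p x) \<circ> p"
  have "{y. ?q y \<noteq> y} \<subseteq> {y. p y \<noteq> y} - {x}"
  proof
    fix y assume "y \<in> {y. ?q y \<noteq> y}"
    moreover have "?q y = y" if "p y = y"
    proof -
      have "y \<noteq> p x" "y \<noteq> x"
        using that x permutes_inj[OF p(1)] by (metis injD)+
      then show ?thesis
        using that by simp
    qed
    ultimately show "y \<in> {y. p y \<noteq> y} - {x}"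
      by auto
  qed
  moreover have fin: "finite {y. p y \<noteq> y}"
    using permutes_not_in[OF p(1)] by (auto intro: finite_subset[OF _ p(2)])
  ultimately have "card {y. ?q y \<noteq> y} \<le> card ({y. p y \<noteq> y} - {x})"
    by (simp add: card_mono)
  also have "\<dots> < card {y. p y \<noteq> y}"
    using fin x by (intro card_Diff1_less) auto
  finally show ?thesis .
qed

lemma sign_permutes_eq_card_orbits:
  assumes "p permutes S" "finite S"
  shows "sign p = (-1) ^ (card S - card (orbit p ` S))"
  using assms(1)
proof (induction "card {x. p x \<noteq> x}" arbitrary: p rule: less_induct)
  case less
  show ?case
  proof (cases "p = id")
    case True
    then have "card (orbit p ` S) = card S"
      using orbit_eq_singleton_iff[of p] by (simp add: card_image inj_on_def)
    then show ?thesis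
      using True by simp
  next
    case False
    then obtain x where x: "p x \<noteq> x"
      by (auto simp: fun_eq_iff)
    then have "x \<in> S" "p x \<in> S"
      using less.prems permutes_not_in permutes_in_image by metis+
    define q where "q = transpose x (p x) \<circ> p"
    have "q permutes S"
      unfolding q_def using \<open>x \<in> S\<close> \<open>p x \<in> S\<close> less.prems
      by (intro permutes_compose permutes_swap_id)
    moreover have "card {y. q y \<noteq> y} < card {y. p y \<noteq> y}"
      unfolding q_def using less.prems assms(2) x by (rule card_support_transpose_comp_less)
    ultimately have IH: "sign q = (-1) ^ (card S - card (orbit q ` S))"
      using less.hyps by blast
    have "sign q = - sign p"
      using x permutes_imp_permutation[OF assms(2) less.prems]
      by (simp add: q_def sign_compose permutation_swap_id sign_swap_id)
    moreover have "card (orbit q ` S) = Suc (card (orbit p ` S))"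
      unfolding q_def using card_orbits_transpose_comp[OF less.prems assms(2) \<open>x \<in> S\<close> x] .
    moreover have "card (orbit q ` S) \<le> card S"
      using assms(2) by (rule card_image_le)
    ultimately have "card S - card (orbit p ` S) = Suc (card S - card (orbit q ` S))"
      "sign p = - sign q"
      by simp_all
    then show ?thesis
      using IH by simp
  qed
qed

lemma adjswap_eq_transpose: "adjswap i = transpose i (Suc i)"
  by (auto simp: adjswap_def transpose_def)

lemma perm_of_word_Cons: "perm_of_word (i # w) = transpose i (Suc i) \<circ> perm_of_word w"
  by (simp add: perm_of_word_def adjswap_eq_transpose)

lemma perm_of_word_Nil: "perm_of_word [] = id"
  by (simp add: perm_of_word_def)

lemma permutation_perm_of_word: "permutation (perm_of_word w)"
proof (induction w)
  case Nil
  then show ?case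
    unfolding perm_of_word_Nil by (rule permutation_id)
next
  case (Cons i w)
  then show ?case
    unfolding perm_of_word_Cons by (rule permutation_compose[OF permutation_swap_id])
qed

lemma sign_perm_of_word: "sign (perm_of_word w) = (-1) ^ length w"
proof (induction w)
  case Nil
  then show ?case
    by (simp add: perm_of_word_Nil sign_id)
next
  case (Cons i w)
  then show ?case
    unfolding perm_of_word_Cons sign_compose[OF permutation_swap_id permutation_perm_of_word]
    by (simp add: sign_swap_id)
qed

lemma perm_of_word_permutes:
  assumes "\<forall>i\<in>set w. i + 1 < N"
  shows "perm_of_word w permutes {..<N}"
  using assms
proof (induction w)
  case Nil
  show ?case
    unfolding perm_of_word_Nil by (rule permutes_id)
next
  case (Cons i w)
  then show ?case
    unfolding perm_of_word_Cons by (intro permutes_compose permutes_swap_id) auto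
qed

definition permute_fst :: "(nat \<Rightarrow> nat) \<Rightarrow> ('a \<times> 'b) list \<Rightarrow> ('a \<times> 'b) list" where
  "permute_fst p x = map (\<lambda>k. (fst (x ! p k), snd (x ! k))) [0..<length x]"

lemma length_permute_fst [simp]: "length (permute_fst p x) = length x"
  by (simp add: permute_fst_def)

lemma nth_permute_fst [simp]: "k < length x \<Longrightarrow> permute_fst p x ! k = (fst (x ! p k), snd (x ! k))"
  by (simp add: permute_fst_def)

lemma permute_fst_id: "permute_fst id x = x"
  by (simp add: list_eq_iff_nth_eq)

lemma permute_fst_permute_fst:
  assumes "\<forall>k<length x. q k < length x"
  shows "permute_fst q (permute_fst r x) = permute_fst (r \<circ> q) x"
  using assms by (simp add: list_eq_iff_nth_eq)

lemma permute_fst_eq_self_iff: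
  "permute_fst p x = x \<longleftrightarrow> (\<forall>k<length x. fst (x ! p k) = fst (x ! k))"
  by (auto simp: list_eq_iff_nth_eq prod_eq_iff)

lemma permute_fst_in_words:
  assumes "x \<in> words (A \<times> B) N" "\<forall>k<N. p k < N"
  shows "permute_fst p x \<in> words (A \<times> B) N"
proof -
  have "x ! k \<in> A \<times> B" if "k < N" for k
    using assms(1) that by (auto simp: words_def)
  then show ?thesis
    using assms by (fastforce simp: words_def in_set_conv_nth)
qed

lemma permute_fst_adjswap_in_words:
  assumes "x \<in> words (A \<times> B) N" "i + 1 < N"
  shows "permute_fst (adjswap i) x \<in> words (A \<times> B) N"
  using assms by (intro permute_fst_in_words) (auto simp: adjswap_def)

lemma permute_fst_adjswap_permute_fst:
  assumes "length x = N" "i + 1 < N"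
  shows "permute_fst (adjswap i) (permute_fst p x) = permute_fst (p \<circ> adjswap i) x"
  using assms by (intro permute_fst_permute_fst) (auto simp: adjswap_def)

lemma finite_words: "finite S \<Longrightarrow> finite (words S N)"
  unfolding words_def using finite_lists_length_eq[of S N] by (simp add: conj_commute)

lemma mmul_monomial_left:
  assumes "finite S" "y0 \<in> words S N" "\<And>y. y \<in> words S N \<Longrightarrow> M x y = c * of_bool (y = y0)"
  shows "mmul S N M M' x z = c * M' y0 z"
proof -
  have "mmul S N M M' x z = (\<Sum>y\<in>words S N. if y = y0 then c * M' y z else 0)"
    unfolding mmul_def using assms(3) by (intro sum.cong) auto
  also have "\<dots> = c * M' y0 z"
    using assms(1,2) by (simp add: sum.delta finite_words)
  finally show ?thesis .
qed

lemma loc_swapV_R: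
  assumes x: "length x = N" and y: "length y = N" and i: "i + 1 < N"
  shows "loc N i (swapV_R \<epsilon>) x y = (-1) ^ \<epsilon> * of_bool (y = permute_fst (adjswap i) x)"
proof -
  have "[x ! i, x ! (i + 1)] = [(fst (y ! (i + 1)), snd (y ! i)), (fst (y ! i), snd (y ! (i + 1)))] \<and>
      (\<forall>k<N. k \<noteq> i \<and> k \<noteq> i + 1 \<longrightarrow> x ! k = y ! k) \<longleftrightarrow>
      (\<forall>k<N. y ! k = (fst (x ! adjswap i k), snd (x ! k)))" (is "?swap \<longleftrightarrow> ?perm")
  proof
    assume ?swap
    then show ?perm
      by (auto simp: adjswap_def prod_eq_iff)
  next
    assume ?perm
    then show ?swap
      using i by (auto simp: adjswap_def prod_eq_iff)
  qed
  also have "?perm \<longleftrightarrow> y = permute_fst (adjswap i) x"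
    using x y by (auto simp: list_eq_iff_nth_eq)
  finally have "?swap \<longleftrightarrow> y = permute_fst (adjswap i) x" .
  then show ?thesis
    by (cases "y = permute_fst (adjswap i) x") (auto simp: loc_def swapV_R_def)
qed

lemma mmul_loc_swapV_R:
  assumes "finite A" "finite B" "x \<in> words (A \<times> B) N" "i + 1 < N"
  shows "mmul (A \<times> B) N (loc N i (swapV_R \<epsilon>)) M x z =
    (-1) ^ \<epsilon> * M (permute_fst (adjswap i) x) z"
proof (rule mmul_monomial_left)
  show "finite (A \<times> B)"
    using assms(1,2) by simp
  show "permute_fst (adjswap i) x \<in> words (A \<times> B) N"
    using assms(3,4) by (rule permute_fst_adjswap_in_words)
  show "loc N i (swapV_R \<epsilon>) x y = (-1) ^ \<epsilon> * of_bool (y = permute_fst (adjswap i) x)"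
    if "y \<in> words (A \<times> B) N" for y
    using assms(3,4) that by (intro loc_swapV_R) (auto simp: words_def)
qed

lemma rho_word_swapV_R:
  assumes "finite A" "finite B" "\<forall>i\<in>set w. i + 1 < N"
    and "x \<in> words (A \<times> B) N" "z \<in> words (A \<times> B) N"
  shows "rho_word (A \<times> B) N (swapV_R \<epsilon>) w x z =
    (-1) ^ (\<epsilon> * length w) * of_bool (z = permute_fst (perm_of_word w) x)"
  using assms(3-5)
proof (induction w arbitrary: x)
  case Nil
  show ?case
    unfolding perm_of_word_Nil permute_fst_id by (simp add: rho_word_def ident_def eq_commute)
next
  case (Cons i w)
  let ?x' = "permute_fst (adjswap i) x"
  have i: "i + 1 < N"
    using Cons.prems(1) by simp
  have x': "?x' \<in> words (A \<times> B) N"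
    using Cons.prems(2) i by (rule permute_fst_adjswap_in_words)
  have "permute_fst (perm_of_word w) ?x' = permute_fst (perm_of_word (i # w)) x"
    using Cons.prems(1,2) permutes_in_image[OF perm_of_word_permutes, of w N]
    by (subst permute_fst_permute_fst) (auto simp: words_def perm_of_word_Cons adjswap_eq_transpose)
  moreover have "rho_word (A \<times> B) N (swapV_R \<epsilon>) (i # w) x z =
      (-1) ^ \<epsilon> * rho_word (A \<times> B) N (swapV_R \<epsilon>) w ?x' z"
    using mmul_loc_swapV_R[OF assms(1,2) Cons.prems(2) i] by (simp add: rho_word_def)
  ultimately show ?case
    using Cons.IH[OF _ x' Cons.prems(3)] Cons.prems(1) by (simp add: power_add)
qed

lemma swapV_R_eq_loc:
  assumes "length x = 2" "length y = 2"
  shows "swapV_R \<epsilon> x y = loc 2 0 (swapV_R \<epsilon>) x y"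
proof -
  obtain a b c d where "x = [a, b]" "y = [c, d]"
    using assms by (auto simp: length_Suc_conv numeral_2_eq_2)
  then show ?thesis
    by (auto simp: loc_def less_2_cases_iff)
qed

lemma mmul_swapV_R_self:
  assumes "finite A" "finite B" and x: "x \<in> words (A \<times> B) 2" and z: "z \<in> words (A \<times> B) 2"
  shows "mmul (A \<times> B) 2 (swapV_R \<epsilon>) (swapV_R \<epsilon>) x z = ident x z"
proof -
  let ?R = "swapV_R \<epsilon>" and ?x' = "permute_fst (adjswap 0) x"
  have x': "?x' \<in> words (A \<times> B) 2"
    using x by (rule permute_fst_adjswap_in_words) simp
  have "mmul (A \<times> B) 2 ?R ?R x z = mmul (A \<times> B) 2 (loc 2 0 ?R) ?R x z"
    unfolding mmul_def using x swapV_R_eq_loc by (intro sum.cong) (auto simp: words_def)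
  also have "\<dots> = (-1) ^ \<epsilon> * ?R ?x' z"
    using x by (simp add: mmul_loc_swapV_R assms)
  also have "\<dots> = (-1) ^ \<epsilon> * loc 2 0 ?R ?x' z"
    using swapV_R_eq_loc x' z by (simp add: words_def)
  also have "\<dots> = (-1) ^ \<epsilon> * (-1) ^ \<epsilon> * of_bool (z = permute_fst (adjswap 0) ?x')"
    using x' z by (simp add: loc_swapV_R words_def)
  also have "permute_fst (adjswap 0) ?x' = permute_fst (adjswap 0 \<circ> adjswap 0) x"
    using x permute_fst_adjswap_permute_fst[of x 2 0] by (simp add: words_def)
  also have "adjswap 0 \<circ> adjswap 0 = id"
    by (auto simp: adjswap_def)
  also have "permute_fst id x = x"
    by (rule permute_fst_id)
  finally show ?thesis
    by (auto simp: ident_def simp flip: power_mult_distrib)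
qed

lemma mmul_loc_swapV_R_triple:
  assumes "finite A" "finite B" and x: "x \<in> words (A \<times> B) N" and z: "z \<in> words (A \<times> B) N"
    and ij: "i + 1 < N" "j + 1 < N"
  shows "mmul (A \<times> B) N (loc N i (swapV_R \<epsilon>))
      (mmul (A \<times> B) N (loc N j (swapV_R \<epsilon>)) (loc N i (swapV_R \<epsilon>))) x z =
    (-1) ^ \<epsilon> * ((-1) ^ \<epsilon> * ((-1) ^ \<epsilon> *
      of_bool (z = permute_fst (adjswap i \<circ> adjswap j \<circ> adjswap i) x)))"
proof -
  let ?s = "\<lambda>i. permute_fst (adjswap i)"
  have x1: "?s i x \<in> words (A \<times> B) N" and x2: "?s j (?s i x) \<in> words (A \<times> B) N"
    using permute_fst_adjswap_in_words x ij by blast+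
  have "length x = N"
    using x by (simp add: words_def)
  then have "?s i (?s j (?s i x)) = permute_fst (adjswap i \<circ> adjswap j \<circ> adjswap i) x"
    using ij by (simp add: permute_fst_adjswap_permute_fst)
  then show ?thesis
    using assms x1 x2 by (simp add: mmul_loc_swapV_R loc_swapV_R words_def)
qed

lemma is_R_matrix_swapV_R:
  assumes "finite A" "finite B"
  shows "is_R_matrix (A \<times> B) (swapV_R \<epsilon>)"
proof -
  have "adjswap 0 \<circ> adjswap 1 \<circ> adjswap 0 = adjswap 1 \<circ> adjswap 0 \<circ> adjswap 1"
    by (auto simp: adjswap_def)
  then show ?thesis
    unfolding is_R_matrix_def op_eq_def
    using mmul_swapV_R_self[OF assms] mmul_loc_swapV_R_triple[OF assms, of _ 3 _ 0 1]
      mmul_loc_swapV_R_triple[OF assms, of _ 3 _ 1 0]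
    by simp
qed

lemma card_words: "finite S \<Longrightarrow> card (words S N) = card S ^ N"
  unfolding words_def using card_lists_length_eq[of S N] by (simp add: conj_commute)

lemma permute_fst_fixed_const_on_orbit:
  assumes p: "p permutes {..<N}" and x: "length x = N" "permute_fst p x = x"
    and k: "k < N" and z: "z \<in> orbit p k"
  shows "fst (x ! z) = fst (x ! k)"
  using z
proof induction
  case base
  then show ?case
    using x k by (simp add: permute_fst_eq_self_iff)
next
  case (step z)
  then have "z < N"
    using permutes_orbit_subset[OF p] k by blast
  then show ?case
    using step.IH x by (simp add: permute_fst_eq_self_iff)
qed

lemma orbit_Min:
  fixes p :: "'a::linorder \<Rightarrow> 'a"
  assumes p: "p permutes S" "finite S" and D: "D \<in> orbit p ` S"
  shows "Min D \<in> D" "Min D \<in> S" "orbit p (Min D) = D"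
proof -
  have perm: "permutation p"
    using p permutation_permutes by blast
  obtain k where k: "k \<in> S" "D = orbit p k"
    using D by auto
  then have "finite D" "D \<noteq> {}" "D \<subseteq> S"
    using finite_orbit[OF permutation_self_in_orbit[OF perm]] orbit_nonempty[of p k]
      permutes_orbit_subset[OF p(1)] by auto
  then show "Min D \<in> D" "Min D \<in> S"
    using Min_in by blast+
  then show "orbit p (Min D) = D"
    using k permutation_orbit_eq[OF perm] by simp
qed

definition cycle_label_word :: "(nat \<Rightarrow> nat) \<Rightarrow> nat \<Rightarrow> (nat set \<Rightarrow> 'a) \<Rightarrow> 'b list \<Rightarrow> ('a \<times> 'b) list"
  where "cycle_label_word p N g u = map (\<lambda>k. (g (orbit p k), u ! k)) [0..<N]"

lemma cycle_label_word_fixed: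
  assumes p: "p permutes {..<N}" and g: "g \<in> orbit p ` {..<N} \<rightarrow>\<^sub>E A" and u: "u \<in> words B N"
  shows "cycle_label_word p N g u \<in> {x \<in> words (A \<times> B) N. permute_fst p x = x}"
proof -
  let ?x = "cycle_label_word p N g u"
  have len: "length ?x = N"
    by (simp add: cycle_label_word_def)
  have nth: "?x ! k = (g (orbit p k), u ! k)" if "k < N" for k
    using that by (simp add: cycle_label_word_def)
  have "set ?x \<subseteq> A \<times> B"
  proof
    fix y assume "y \<in> set ?x"
    then obtain k where "k < N" "y = (g (orbit p k), u ! k)"
      using len nth by (auto simp: in_set_conv_nth)
    moreover have "orbit p k \<in> orbit p ` {..<N}"
      using \<open>k < N\<close> by simp
    ultimately show "y \<in> A \<times> B"
      using g u by (auto simp: words_def)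
  qed
  moreover have "permute_fst p ?x = ?x"
    unfolding permute_fst_eq_self_iff len
  proof (intro allI impI)
    fix k assume k: "k < N"
    then have "p k < N"
      using permutes_in_image[OF p] by simp
    moreover have "orbit p (p k) = orbit p k"
      using permutes_imp_permutation[OF finite_lessThan p] by (rule permutation_orbit_step)
    ultimately show "fst (?x ! p k) = fst (?x ! k)"
      using nth k by simp
  qed
  ultimately show ?thesis
    using len by (simp add: words_def)
qed

lemma cycle_label_word_Min:
  assumes p: "p permutes {..<N}" and x: "length x = N" "permute_fst p x = x"
  shows "cycle_label_word p N (restrict (\<lambda>D. fst (x ! Min D)) (orbit p ` {..<N})) (map snd x) = x"
proof -
  have "fst (x ! Min (orbit p k)) = fst (x ! k)" if "k < N" for k
  proof -
    have "Min (orbit p k) \<in> orbit p k"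
      using that by (intro orbit_Min(1)[OF p finite_lessThan]) simp
    then show ?thesis
      using permute_fst_fixed_const_on_orbit[OF p x that] by blast
  qed
  then show ?thesis
    using x by (simp add: cycle_label_word_def list_eq_iff_nth_eq)
qed

lemma card_permute_fst_fixed:
  fixes A :: "'a set" and B :: "'b set"
  assumes p: "p permutes {..<N}" and B: "finite B"
  shows "card {x \<in> words (A \<times> B) N. permute_fst p x = x} =
    card A ^ card (orbit p ` {..<N}) * card B ^ N"
proof -
  let ?O = "orbit p ` {..<N}" and ?F = "{x \<in> words (A \<times> B) N. permute_fst p x = x}"
  define label :: "('a \<times> 'b) list \<Rightarrow> (nat set \<Rightarrow> 'a) \<times> 'b list"
    where "label = (\<lambda>x. (restrict (\<lambda>D. fst (x ! Min D)) ?O, map snd x))"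
  have "bij_betw (case_prod (cycle_label_word p N)) ((?O \<rightarrow>\<^sub>E A) \<times> words B N) ?F"
  proof (rule bij_betw_byWitness[where f' = label])
    show "\<forall>a\<in>(?O \<rightarrow>\<^sub>E A) \<times> words B N. label (case_prod (cycle_label_word p N) a) = a"
    proof clarify
      fix g u assume g: "g \<in> ?O \<rightarrow>\<^sub>E A" and u: "u \<in> words B N"
      have "restrict (\<lambda>D. g (orbit p (Min D))) ?O = g"
        using g orbit_Min(3)[OF p finite_lessThan]
        by (auto simp: fun_eq_iff PiE_def extensional_def)
      moreover have "map snd (cycle_label_word p N g u) = u"
        using u by (simp add: cycle_label_word_def words_def list_eq_iff_nth_eq)
      ultimately show "label (cycle_label_word p N g u) = (g, u)"
        using orbit_Min(2)[OF p finite_lessThan]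
        by (simp add: label_def cycle_label_word_def cong: restrict_cong)
    qed
    show "\<forall>x\<in>?F. case_prod (cycle_label_word p N) (label x) = x"
      using cycle_label_word_Min[OF p] by (auto simp: label_def words_def)
    show "case_prod (cycle_label_word p N) ` ((?O \<rightarrow>\<^sub>E A) \<times> words B N) \<subseteq> ?F"
      using cycle_label_word_fixed[OF p]
      by (intro image_subsetI) (auto simp only: mem_Times_iff split_beta)
    show "label ` ?F \<subseteq> (?O \<rightarrow>\<^sub>E A) \<times> words B N"
    proof (rule image_subsetI)
      fix x assume "x \<in> ?F"
      then have x: "length x = N" "set x \<subseteq> A \<times> B"
        by (auto simp: words_def)
      have "fst (x ! Min D) \<in> A" if "D \<in> ?O" for D
      proof -
        have "x ! Min D \<in> set x"
          using x(1) orbit_Min(2)[OF p finite_lessThan that] by simp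
        then show ?thesis
          using x(2) by auto
      qed
      moreover have "map snd x \<in> words B N"
        using x by (auto simp: words_def)
      ultimately show "label x \<in> (?O \<rightarrow>\<^sub>E A) \<times> words B N"
        by (simp add: label_def restrict_PiE_iff)
    qed
  qed
  then have "card ?F = card ((?O \<rightarrow>\<^sub>E A) \<times> words B N)"
    by (simp add: bij_betw_same_card)
  also have "\<dots> = card A ^ card ?O * card B ^ N"
    using B by (simp add: card_cartesian_product card_PiE card_words)
  finally show ?thesis .
qed

lemma trace_rho_word_swapV_R:
  assumes "finite A" "finite B" "\<forall>i\<in>set w. i + 1 < N"
  shows "(\<Sum>x\<in>words (A \<times> B) N. rho_word (A \<times> B) N (swapV_R \<epsilon>) w x x) =
    (-1) ^ (\<epsilon> * length w) *
      of_nat (card {x \<in> words (A \<times> B) N. permute_fst (perm_of_word w) x = x})"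
proof -
  have "(\<Sum>x\<in>words (A \<times> B) N. rho_word (A \<times> B) N (swapV_R \<epsilon>) w x x) =
      (\<Sum>x\<in>words (A \<times> B) N. (-1) ^ (\<epsilon> * length w) * of_bool (permute_fst (perm_of_word w) x = x))"
    using rho_word_swapV_R[OF assms] by (intro sum.cong) (auto simp: eq_commute)
  also have "\<dots> = (-1) ^ (\<epsilon> * length w) *
      (\<Sum>x\<in>words (A \<times> B) N. of_bool (permute_fst (perm_of_word w) x = x))"
    by (simp only: sum_distrib_left)
  also have "(\<Sum>x\<in>words (A \<times> B) N. of_bool (permute_fst (perm_of_word w) x = x)) =
      of_nat (card {x \<in> words (A \<times> B) N. permute_fst (perm_of_word w) x = x})"
    using assms(1,2) by (simp add: finite_words Int_def)
  finally show ?thesis .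
qed

lemma chi_word_swapV_R:
  assumes A: "finite A" "A \<noteq> {}" and B: "finite B" "B \<noteq> {}" and w: "\<forall>i\<in>set w. i + 1 < N"
  shows "chi_word (A \<times> B) N (swapV_R \<epsilon>) w =
    complex_of_real (((-1) ^ \<epsilon> / real (card A)) ^ (N - card (orbit (perm_of_word w) ` {..<N})))"
proof -
  let ?c = "card (orbit (perm_of_word w) ` {..<N})" and ?a = "card A" and ?b = "card B"
  have P: "perm_of_word w permutes {..<N}"
    using w by (rule perm_of_word_permutes)
  have "?c \<le> N"
    using card_image_le[of "{..<N}"] by simp
  then have prod: "(?a * ?b) ^ N = ?a ^ (N - ?c) * (?a ^ ?c * ?b ^ N)"
    by (simp add: power_mult_distrib mult.assoc flip: power_add)
  have "(-1 :: int) ^ length w = (-1) ^ (N - ?c)"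
    using sign_perm_of_word[of w] sign_permutes_eq_card_orbits[OF P] by simp
  then have "of_int ((-1) ^ length w) = (of_int ((-1) ^ (N - ?c)) :: complex)"
    by (rule arg_cong)
  then have "(-1 :: complex) ^ length w = (-1) ^ (N - ?c)"
    by simp
  then have sign: "(-1 :: complex) ^ (\<epsilon> * length w) = ((-1) ^ \<epsilon>) ^ (N - ?c)"
    by (metis mult.commute power_mult)
  have "complex_of_nat (?a ^ ?c * ?b ^ N) \<noteq> 0"
    using A B by simp
  then have "chi_word (A \<times> B) N (swapV_R \<epsilon>) w = ((-1) ^ \<epsilon>) ^ (N - ?c) / of_nat ?a ^ (N - ?c)"
    unfolding chi_word_def trace_rho_word_swapV_R[OF A(1) B(1) w]
      card_permute_fst_fixed[OF P B(1)] card_cartesian_product prod sign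
    unfolding of_nat_mult[of "?a ^ (N - ?c)"] of_nat_power
    by (rule mult_divide_mult_cancel_right)
  then show ?thesis
    by (simp add: power_divide)
qed

lemma thoma_char_eq_power:
  assumes p: "p permutes S" "finite S" and thoma_p: "\<And>k. k \<ge> 1 \<Longrightarrow> thoma_p \<alpha> \<beta> k = r ^ (k - 1)"
  shows "thoma_char \<alpha> \<beta> p = r ^ (card S - card (orbit p ` S))"
proof -
  have perm: "permutation p"
    using p permutation_permutes by blast
  have card_orbit: "card (orbit p z) \<ge> 1" for z
    using finite_orbit[OF permutation_self_in_orbit[OF perm]] orbit_nonempty[of p z]
    by (simp add: Suc_leI card_gt_0_iff)
  have "perm_orbit p = orbit p"
    by (rule ext) (simp add: perm_orbit_def orbit_altdef_permutation[OF perm])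
  then have "thoma_char \<alpha> \<beta> p = (\<Prod>D\<in>orbit p ` {x. p x \<noteq> x}. r ^ (card D - 1))"
    unfolding thoma_char_def by (intro prod.cong) (auto simp: thoma_p[OF card_orbit])
  also have "\<dots> = (\<Prod>D\<in>orbit p ` S. r ^ (card D - 1))"
  proof (rule prod.mono_neutral_left)
    show "orbit p ` {x. p x \<noteq> x} \<subseteq> orbit p ` S"
      using permutes_not_in[OF p(1)] by blast
    show "\<forall>D\<in>orbit p ` S - orbit p ` {x. p x \<noteq> x}. r ^ (card D - 1) = 1"
    proof
      fix D assume "D \<in> orbit p ` S - orbit p ` {x. p x \<noteq> x}"
      then obtain z where "D = orbit p z" "p z = z"
        by blast
      then show "r ^ (card D - 1) = 1"
        by (simp add: orbit_eq_singleton_iff[THEN iffD2])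
    qed
  qed (use p in simp)
  also have "\<dots> = r ^ (\<Sum>D\<in>orbit p ` S. card D - 1)"
    by (simp add: power_sum)
  also have "(\<Sum>D\<in>orbit p ` S. card D - 1) = (\<Sum>D\<in>orbit p ` S. card D) - (\<Sum>D\<in>orbit p ` S. 1)"
    by (rule sum_subtractf_nat) (blast intro: card_orbit)
  also have "\<dots> = card S - card (orbit p ` S)"
    using sum_card_orbits[OF p] by simp
  finally show ?thesis .
qed

lemma suminf_uniform_power:
  assumes "k \<ge> 1"
  shows "(\<Sum>i. (if c \<and> i < n then a else 0) ^ k) = (if c then real n * a ^ k else 0)"
proof -
  have "(\<Sum>i. (if c \<and> i < n then a else 0) ^ k) = (\<Sum>i<n. (if c \<and> i < n then a else 0) ^ k)"
    by (rule suminf_finite) (use assms in auto)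
  then show ?thesis
    using assms by simp
qed

lemma thoma_p_uniform:
  assumes "\<epsilon> \<in> {0, 1}" "n \<ge> 1" "k \<ge> 1"
  shows "thoma_p (\<lambda>i. if \<epsilon> = 0 \<and> i < n then 1 / real n else 0)
      (\<lambda>i. if \<epsilon> = 1 \<and> i < n then 1 / real n else 0) k = ((-1) ^ \<epsilon> / real n) ^ (k - 1)"
proof -
  have "real n * (1 / real n) ^ k = (1 / real n) ^ (k - 1)"
    using assms(2,3) by (cases k) (simp_all add: field_simps)
  then show ?thesis
    using assms(1) by (auto simp: thoma_p_def suminf_uniform_power[OF assms(3)] power_divide)
qed

lemma thoma_params_uniform:
  fixes \<epsilon> :: nat
  assumes "\<epsilon> \<in> {0, 1}" "n \<ge> 1"
  shows "thoma_params (\<lambda>i. if \<epsilon> = 0 \<and> i < n then 1 / real n else 0)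
      (\<lambda>i. if \<epsilon> = 1 \<and> i < n then 1 / real n else 0)"
proof -
  let ?u = "\<lambda>c i. if c \<and> i < n then 1 / real n else (0 :: real)"
  have "antimono (?u c)" for c
    by (auto simp: antimono_def)
  moreover have "summable (?u c)" for c
    by (rule summable_finite[of "{..<n}"]) auto
  moreover have "(\<Sum>i. ?u c i) = (if c then 1 else 0)" for c
    using suminf_uniform_power[of 1 c n "1 / real n"] assms(2) by simp
  ultimately show ?thesis
    unfolding thoma_params_def using assms(1) by auto
qed

theorem mainTheorem2:
  fixes n m \<epsilon> :: nat
  assumes "n \<ge> 1" and "m \<ge> 1" and "\<epsilon> \<in> {0, 1}"
  defines "\<alpha> \<equiv> (\<lambda>i. if \<epsilon> = 0 \<and> i < n then 1 / real n else 0)"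
      and "\<beta> \<equiv> (\<lambda>i. if \<epsilon> = 1 \<and> i < n then 1 / real n else 0)"
  shows "is_R_matrix (basisVW n m) (swapV_R \<epsilon>) \<and> thoma_params \<alpha> \<beta> \<and>
         (\<forall>w N. (\<forall>i\<in>set w. i + 1 < N) \<longrightarrow>
            chi_word (basisVW n m) N (swapV_R \<epsilon>) w = complex_of_real (thoma_char \<alpha> \<beta> (perm_of_word w)))"
proof (intro conjI allI impI)
  show "is_R_matrix (basisVW n m) (swapV_R \<epsilon>)"
    unfolding basisVW_def by (intro is_R_matrix_swapV_R) simp_all
  show "thoma_params \<alpha> \<beta>"
    unfolding \<alpha>_def \<beta>_def using assms(3,1) by (rule thoma_params_uniform)
  fix w :: "nat list" and N :: nat
  assume w: "\<forall>i\<in>set w. i + 1 < N"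
  have "thoma_char \<alpha> \<beta> (perm_of_word w) =
      ((-1) ^ \<epsilon> / real n) ^ (card {..<N} - card (orbit (perm_of_word w) ` {..<N}))"
    unfolding \<alpha>_def \<beta>_def using perm_of_word_permutes[OF w] finite_lessThan
    by (rule thoma_char_eq_power) (rule thoma_p_uniform[OF assms(3,1)])
  moreover have "chi_word (basisVW n m) N (swapV_R \<epsilon>) w =
      complex_of_real (((-1) ^ \<epsilon> / real n) ^ (N - card (orbit (perm_of_word w) ` {..<N})))"
    using chi_word_swapV_R[of "{..<n}" "{..<m}" w N \<epsilon>] w assms(1,2)
    by (simp add: basisVW_def lessThan_empty_iff)
  ultimately show "chi_word (basisVW n m) N (swapV_R \<epsilon>) w =
      complex_of_real (thoma_char \<alpha> \<beta> (perm_of_word w))"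
    by simp
qed

end
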